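(* Let $(G,V^\infty,T,k)$ be an instance of \textsc{OddMultiwayNodeCut} with $G$ a DAG, and let $M$ be a solution. Suppose there exists $v\in r_G(M)$ such that $M$ contains no important $v\rightarrow T$ separator. Then there exists a solution $M'$ such that: - $|M'|\le|M|$; - $r_G(M)\cup f_G(M)\cup M\subseteq r_G(M')\cup f_G(M')\cup M'$; - $r_G(M)\subsetneq r_G(M')$.
   Context: Paths are simple directed paths; a path is odd if it has an odd number of edges. An instance $(G,V^\infty,T,k)$ of \textsc{OddMultiwayNodeCut} consists of a DAG $G$, protected nodes $V^\infty\subseteq V(G)$, terminals $T\subseteq V^\infty$ and $k\in\mathbb{Z}_+$. A $T$-path has both ends in $T$. A solution is a set $M\subseteq V(G)\setminus V^\infty$ intersecting every odd $T$-path. $\mathcal{R}_H(X)$ is the set of nodes reachable from $X$ in $H$, including $X$. The shadows are $f_G(M):=V(G\setminus M)\setminus\mathcal{R}_{G\setminus M}(T)$, and $r_G(M):=$ the set of $v\in V(G)\setminus M$ with no path to $T$ in $G\setminus M$. For $X,Y\subseteq V(G)$, an $X\rightarrow Y$ separator is a set $S\subseteq V(G)\setminus V^\infty$ such that $G\setminus S$ has no path from $X$ to $Y$. An $X\rightarrow Y$ separator $S'$ dominates an $X\rightarrow Y$ separator $S$ if $|S'|\le|S|$ and $\mathcal{R}_{G\setminus S}(X)\subsetneq\mathcal{R}_{G\setminus S'}(X)$. An important $X\rightarrow Y$ separator is an inclusion-minimal $X\rightarrow Y$ separator that is dominated by no other $X\rightarrow Y$ separator. *)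

theory Defs
  imports Main
begin

text \<open>A directed graph is given by a vertex set V and an edge set E (pairs (u,w) = edge u->w).
  The graph G minus a node set S has vertices V - S and the edges of E between them.\<close>

definition dag :: "'a set \<Rightarrow> ('a \<times> 'a) set \<Rightarrow> bool" where
  "dag V E \<longleftrightarrow> finite V \<and> E \<subseteq> V \<times> V \<and> acyclic E"

definition del_edges :: "('a \<times> 'a) set \<Rightarrow> 'a set \<Rightarrow> ('a \<times> 'a) set" where
  "del_edges E S = {(a, b) \<in> E. a \<notin> S \<and> b \<notin> S}"

definition is_path :: "'a set \<Rightarrow> ('a \<times> 'a) set \<Rightarrow> 'a list \<Rightarrow> bool" where
  "is_path V E p \<longleftrightarrow> p \<noteq> [] \<and> distinct p \<and> set p \<subseteq> V \<and> successively (\<lambda>a b. (a, b) \<in> E) p"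

definition path_len :: "'a list \<Rightarrow> nat" where
  "path_len p = length p - 1"

definition has_path :: "'a set \<Rightarrow> ('a \<times> 'a) set \<Rightarrow> 'a set \<Rightarrow> 'a \<Rightarrow> 'a \<Rightarrow> bool" where
  "has_path V E S x y \<longleftrightarrow>
     (\<exists>p. is_path (V - S) (del_edges E S) p \<and> hd p = x \<and> last p = y)"

text \<open>\<R>_{G minus S}(X): nodes reachable from X in G minus S (including X, i.e. X minus S).\<close>
definition reach :: "'a set \<Rightarrow> ('a \<times> 'a) set \<Rightarrow> 'a set \<Rightarrow> 'a set \<Rightarrow> 'a set" where
  "reach V E S X = {u. \<exists>x\<in>X. has_path V E S x u}"

definition odd_T_path :: "'a set \<Rightarrow> ('a \<times> 'a) set \<Rightarrow> 'a set \<Rightarrow> 'a list \<Rightarrow> bool" where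
  "odd_T_path V E T p \<longleftrightarrow> is_path V E p \<and> hd p \<in> T \<and> last p \<in> T \<and> odd (path_len p)"

definition omnc_solution :: "'a set \<Rightarrow> ('a \<times> 'a) set \<Rightarrow> 'a set \<Rightarrow> 'a set \<Rightarrow> 'a set \<Rightarrow> bool" where
  "omnc_solution V E Vinf T M \<longleftrightarrow>
     M \<subseteq> V - Vinf \<and> (\<forall>p. odd_T_path V E T p \<longrightarrow> set p \<inter> M \<noteq> {})"

definition f_shadow :: "'a set \<Rightarrow> ('a \<times> 'a) set \<Rightarrow> 'a set \<Rightarrow> 'a set \<Rightarrow> 'a set" where
  "f_shadow V E T M = (V - M) - reach V E M T"

definition r_shadow :: "'a set \<Rightarrow> ('a \<times> 'a) set \<Rightarrow> 'a set \<Rightarrow> 'a set \<Rightarrow> 'a set" where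
  "r_shadow V E T M = {v \<in> V - M. \<not> (\<exists>t\<in>T. has_path V E M v t)}"

definition separator :: "'a set \<Rightarrow> ('a \<times> 'a) set \<Rightarrow> 'a set \<Rightarrow> 'a set \<Rightarrow> 'a set \<Rightarrow> 'a set \<Rightarrow> bool" where
  "separator V E Vinf X Y S \<longleftrightarrow> S \<subseteq> V - Vinf \<and> \<not> (\<exists>x\<in>X. \<exists>y\<in>Y. has_path V E S x y)"

definition dominates :: "'a set \<Rightarrow> ('a \<times> 'a) set \<Rightarrow> 'a set \<Rightarrow> 'a set \<Rightarrow> 'a set \<Rightarrow> bool" where
  "dominates V E X S' S \<longleftrightarrow> card S' \<le> card S \<and> reach V E S X \<subset> reach V E S' X"

definition important_separator :: "'a set \<Rightarrow> ('a \<times> 'a) set \<Rightarrow> 'a set \<Rightarrow> 'a set \<Rightarrow> 'a set \<Rightarrow> 'a set \<Rightarrow> bool" where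
  "important_separator V E Vinf X Y S \<longleftrightarrow>
     separator V E Vinf X Y S \<and>
     (\<forall>S'. S' \<subset> S \<longrightarrow> \<not> separator V E Vinf X Y S') \<and>
     \<not> (\<exists>S'. separator V E Vinf X Y S' \<and> dominates V E X S' S)"

end

theory Submission
  imports Defs "HOL-Library.Product_Lexorder"
begin

text \<open>
  Let \<open>R\<close> be the set of nodes reachable from \<open>v\<close> in \<open>G - M\<close> and \<open>S \<subseteq> M\<close> the nodes of \<open>M\<close>
  entered by an edge leaving \<open>R\<close>. Then \<open>S\<close> is a \<open>v \<rightarrow> T\<close> separator, so some important one
  \<open>S'\<close> has \<open>|S'| \<le> |S|\<close> and \<open>R \<subseteq> N\<close>, where \<open>N\<close> is the set reachable from \<open>v\<close> in \<open>G - S'\<close>.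
  As \<open>S'\<close> is not contained in \<open>M\<close>, some \<open>s \<in> S - S'\<close> exists, and \<open>S - S' \<subseteq> N\<close>.
  Put \<open>M' = (M - S) \<union> (S' - r(M))\<close>. Walking backwards from \<open>T\<close> in \<open>G - M'\<close> one can enter
  neither \<open>N\<close> (it is left only through \<open>S'\<close>) nor \<open>M - M' \<subseteq> S - S' \<subseteq> N\<close>, so every node
  reaching \<open>T\<close> in \<open>G - M'\<close> reaches it in \<open>G - M\<close> along the same walk. Hence \<open>T\<close>-paths
  avoiding \<open>M'\<close> avoid \<open>M\<close>, both shadows only grow, and \<open>s\<close> joins the reverse shadow.
\<close>

lemma rtrancl_to_last_if_successively:
  "successively (\<lambda>a b. (a, b) \<in> R) p \<Longrightarrow> x \<in> set p \<Longrightarrow> (x, last p) \<in> R\<^sup>*"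
proof (induction p arbitrary: x rule: induct_list012)
  case (3 a b p)
  then show ?case by (auto intro: converse_rtrancl_into_rtrancl)
qed auto

lemma rtrancl_imp_is_path:
  assumes "(x, y) \<in> R\<^sup>*" "acyclic R" "R \<subseteq> A \<times> A" "x \<in> A"
  shows "\<exists>p. is_path A R p \<and> hd p = x \<and> last p = y"
  using assms(1)
proof (induction rule: rtrancl_induct)
  case base
  then show ?case using assms(4) by (intro exI[of _ "[x]"]) (auto simp: is_path_def)
next
  case (step y z)
  then obtain p where p: "is_path A R p" "hd p = x" "last p = y" by blast
  have "z \<notin> set p"
  proof
    assume "z \<in> set p"
    then have "(z, y) \<in> R\<^sup>*"
      using rtrancl_to_last_if_successively p by (fastforce simp: is_path_def)
    then have "(z, z) \<in> R\<^sup>+" using step(2) by (rule rtrancl_into_trancl1)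
    then show False using assms(2) by (auto simp: acyclic_def)
  qed
  then have "is_path A R (p @ [z])"
    using p step(2) assms(3) by (auto simp: is_path_def successively_append_iff)
  then show ?case using p by (intro exI[of _ "p @ [z]"]) (auto simp: is_path_def)
qed

lemma has_path_iff_rtrancl:
  assumes "dag V E"
  shows "has_path V E S x y \<longleftrightarrow> x \<in> V - S \<and> (x, y) \<in> (del_edges E S)\<^sup>*"
proof
  assume "has_path V E S x y"
  then obtain p where p: "is_path (V - S) (del_edges E S) p" "hd p = x" "last p = y"
    unfolding has_path_def by blast
  then have "p \<noteq> []" "set p \<subseteq> V - S" "successively (\<lambda>a b. (a, b) \<in> del_edges E S) p"
    unfolding is_path_def by simp_all
  then show "x \<in> V - S \<and> (x, y) \<in> (del_edges E S)\<^sup>*"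
    using rtrancl_to_last_if_successively[of "del_edges E S" p x] p(2,3) hd_in_set[of p] by auto
next
  assume "x \<in> V - S \<and> (x, y) \<in> (del_edges E S)\<^sup>*"
  moreover have "acyclic (del_edges E S)"
    using assms acyclic_subset[of E "del_edges E S"] by (auto simp: dag_def del_edges_def)
  moreover have "del_edges E S \<subseteq> (V - S) \<times> (V - S)"
    using assms by (auto simp: dag_def del_edges_def)
  ultimately show "has_path V E S x y"
    unfolding has_path_def by (blast intro: rtrancl_imp_is_path)
qed

lemma rtrancl_del_edges_notin:
  "(x, y) \<in> (del_edges E S)\<^sup>* \<Longrightarrow> x \<notin> S \<Longrightarrow> y \<notin> S"
  by (induction rule: rtrancl_induct) (auto simp: del_edges_def)

lemma has_path_antimono:
  assumes "S \<subseteq> S'" "has_path V E S' x y"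
  shows "has_path V E S x y"
  using assms unfolding has_path_def is_path_def del_edges_def
  by (blast intro: successively_mono)

lemma reach_antimono:
  assumes "S \<subseteq> S'"
  shows "reach V E S' X \<subseteq> reach V E S X"
  unfolding reach_def using has_path_antimono[OF assms] by blast

lemma reach_subset: "reach V E S X \<subseteq> V - S"
  unfolding reach_def has_path_def is_path_def using last_in_set by blast

lemma reach_out_closed:
  assumes "dag V E" "u \<in> reach V E S X" "(u, w) \<in> E" "w \<notin> S"
  shows "w \<in> reach V E S X"
  using assms rtrancl_del_edges_notin[of _ u E S]
  by (fastforce simp: reach_def has_path_iff_rtrancl del_edges_def
      intro: rtrancl_into_rtrancl)

lemma separator_iff_reach:
  "separator V E Vinf X Y S \<longleftrightarrow> S \<subseteq> V - Vinf \<and> reach V E S X \<inter> Y = {}"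
  by (auto simp: separator_def reach_def)

lemma r_shadow_iff_reach:
  "v \<in> r_shadow V E T M \<longleftrightarrow> v \<in> V - M \<and> reach V E M {v} \<inter> T = {}"
  by (auto simp: r_shadow_def reach_def)

text \<open>Among the separators \<open>S'\<close> with \<open>|S'| \<le> |S|\<close> and \<open>reach(S) \<subseteq> reach(S')\<close>, one with largest
  reachable set and, among those, smallest size is important.\<close>

lemma important_separator_exists:
  assumes "finite V" and sep: "separator V E Vinf X Y S"
  obtains S' where "important_separator V E Vinf X Y S'" "card S' \<le> card S"
    "reach V E S X \<subseteq> reach V E S' X"
proof -
  define F where "F = {S'. separator V E Vinf X Y S' \<and> card S' \<le> card S \<and>
    reach V E S X \<subseteq> reach V E S' X}"
  define key :: "'a set \<Rightarrow> int \<times> nat" where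
    "key S' = (- int (card (reach V E S' X)), card S')" for S'
  have "F \<subseteq> Pow V" by (auto simp: F_def separator_def)
  then have "finite F" using assms(1) finite_subset by blast
  moreover have "S \<in> F" using sep by (simp add: F_def)
  ultimately have "Min (key ` F) \<in> key ` F" by (intro Min_in) auto
  then obtain S0 where S0: "S0 \<in> F" "key S0 = Min (key ` F)" by auto
  have key_min: "\<not> key S' < key S0" if "S' \<in> F" for S'
    using S0(2) Min_le[OF finite_imageI[OF \<open>finite F\<close>]] that by (metis imageI leD)
  have sep0: "separator V E Vinf X Y S0" and card0: "card S0 \<le> card S"
    and reach0: "reach V E S X \<subseteq> reach V E S0 X" using S0(1) by (auto simp: F_def)
  have fin_reach: "finite (reach V E A X)" for A
    using reach_subset assms(1) finite_subset by (metis finite_Diff)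
  have "important_separator V E Vinf X Y S0"
    unfolding important_separator_def
  proof (intro conjI allI impI notI sep0)
    fix S' assume sub: "S' \<subset> S0" and sep': "separator V E Vinf X Y S'"
    have "finite S0" using sep0 assms(1) finite_subset by (auto simp: separator_def)
    then have "card S' < card S0" using sub psubset_card_mono by blast
    moreover have "reach V E S0 X \<subseteq> reach V E S' X" using sub by (intro reach_antimono) auto
    moreover from this have "card (reach V E S0 X) \<le> card (reach V E S' X)"
      using fin_reach card_mono by blast
    ultimately have "S' \<in> F" "key S' < key S0"
      using sep' card0 reach0 by (auto simp: F_def key_def)
    then show False using key_min by blast
  next
    assume "\<exists>S'. separator V E Vinf X Y S' \<and> dominates V E X S' S0"
    then obtain S' where sep': "separator V E Vinf X Y S'" and "card S' \<le> card S0"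
      and larger: "reach V E S0 X \<subset> reach V E S' X" by (auto simp: dominates_def)
    moreover have "card (reach V E S0 X) < card (reach V E S' X)"
      using larger fin_reach psubset_card_mono by blast
    ultimately have "S' \<in> F" "key S' < key S0"
      using card0 reach0 by (auto simp: F_def key_def)
    then show False using key_min by blast
  qed
  then show thesis using that card0 reach0 by blast
qed

definition boundary :: "'a set \<Rightarrow> ('a \<times> 'a) set \<Rightarrow> 'a set \<Rightarrow> 'a set \<Rightarrow> 'a set" where
  "boundary V E M X = {s \<in> M. \<exists>x \<in> reach V E M X. (x, s) \<in> E}"

lemma boundary_subset: "boundary V E M X \<subseteq> M"
  by (auto simp: boundary_def)

lemma reach_boundary:
  assumes dag: "dag V E" and "X \<inter> M = {}"
  shows "reach V E (boundary V E M X) X = reach V E M X"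
proof
  show "reach V E M X \<subseteq> reach V E (boundary V E M X) X"
    by (intro reach_antimono boundary_subset)
next
  show "reach V E (boundary V E M X) X \<subseteq> reach V E M X"
  proof
    fix u assume "u \<in> reach V E (boundary V E M X) X"
    then obtain x where x: "x \<in> X" "x \<in> V" and "(x, u) \<in> (del_edges E (boundary V E M X))\<^sup>*"
      by (auto simp: reach_def has_path_iff_rtrancl[OF dag])
    from this(3) show "u \<in> reach V E M X"
    proof (induction rule: rtrancl_induct)
      case base
      then show ?case using x assms(2) by (auto simp: reach_def has_path_iff_rtrancl[OF dag])
    next
      case (step y z)
      then have "(y, z) \<in> E" "z \<notin> boundary V E M X" by (auto simp: del_edges_def)
      moreover from this have "z \<notin> M" using step.IH by (auto simp: boundary_def)
      ultimately show ?case using reach_out_closed[OF dag] step.IH by blast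
    qed
  qed
qed

lemma boundary_diff_subset_reach:
  assumes "dag V E" "reach V E M X \<subseteq> reach V E S X"
  shows "boundary V E M X - S \<subseteq> reach V E S X"
  using assms reach_out_closed[OF assms(1)] by (fastforce simp: boundary_def)

lemma boundary_separator:
  assumes "dag V E" "X \<inter> M = {}" "M \<subseteq> V - Vinf" "reach V E M X \<inter> Y = {}"
  shows "separator V E Vinf X Y (boundary V E M X)"
  using assms boundary_subset[of V E M X] by (auto simp: separator_iff_reach reach_boundary)

lemma r_shadow_iff_rtrancl:
  assumes "dag V E"
  shows "x \<in> r_shadow V E T M \<longleftrightarrow> x \<in> V - M \<and> \<not> (\<exists>t\<in>T. (x, t) \<in> (del_edges E M)\<^sup>*)"
  by (auto simp: r_shadow_def has_path_iff_rtrancl[OF assms])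

locale shadow_replacement =
  fixes V :: "'a set" and E :: "('a \<times> 'a) set" and Vinf T M X S S' :: "'a set"
  assumes dag: "dag V E"
    and terminals_protected: "T \<subseteq> Vinf"
    and solution: "omnc_solution V E Vinf T M"
    and S_subset: "S \<subseteq> M"
    and separator: "separator V E Vinf X T S'"
    and S_diff_reach: "S - S' \<subseteq> reach V E S' X"
begin

definition M' :: "'a set" where
  "M' = (M - S) \<union> (S' - r_shadow V E T M)"

lemma terminals_disjoint: "T \<inter> M = {}" "T \<inter> M' = {}"
  using solution separator terminals_protected
  by (auto simp: M'_def omnc_solution_def separator_def)

lemma reaches_T_avoiding_M':
  assumes "(u, t) \<in> (del_edges E M')\<^sup>*" "t \<in> T"
  shows "u \<notin> reach V E S' X \<and> u \<notin> M \<and> (\<exists>t'\<in>T. (u, t') \<in> (del_edges E M)\<^sup>*)"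
  using assms(1)
proof (induction rule: converse_rtrancl_induct)
  case base
  then show ?case using assms(2) separator terminals_disjoint by (auto simp: separator_iff_reach)
next
  case (step u w)
  then have edge: "(u, w) \<in> E" "u \<notin> M'" "w \<notin> M'" by (auto simp: del_edges_def)
  obtain t' where t': "t' \<in> T" "(w, t') \<in> (del_edges E M)\<^sup>*" using step.IH by blast
  have "w \<in> V" using edge(1) dag by (auto simp: dag_def)
  then have "w \<notin> r_shadow V E T M" using t' step.IH by (auto simp: r_shadow_iff_rtrancl[OF dag])
  then have "w \<notin> S'" using edge(3) by (auto simp: M'_def)
  then have u_notin_reach: "u \<notin> reach V E S' X"
    using reach_out_closed[OF dag _ edge(1)] step.IH by blast
  have "u \<notin> M"
  proof
    assume "u \<in> M"
    then have "u \<in> S - S'" using edge(2) by (auto simp: M'_def r_shadow_def)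
    then show False using S_diff_reach u_notin_reach by blast
  qed
  moreover have "(u, w) \<in> del_edges E M" using edge(1) \<open>u \<notin> M\<close> step.IH by (simp add: del_edges_def)
  ultimately show ?case using u_notin_reach t' by (blast intro: converse_rtrancl_into_rtrancl)
qed

lemma rtrancl_avoiding_M_if_reaches_T:
  assumes "(a, b) \<in> (del_edges E M')\<^sup>*" "(b, t) \<in> (del_edges E M')\<^sup>*" "t \<in> T"
  shows "(a, b) \<in> (del_edges E M)\<^sup>*"
  using assms(1,2)
proof (induction rule: rtrancl_induct)
  case (step y z)
  then have "(y, t) \<in> (del_edges E M')\<^sup>*" by (blast intro: converse_rtrancl_into_rtrancl)
  then have "(a, y) \<in> (del_edges E M)\<^sup>*" "y \<notin> M"
    using step.IH reaches_T_avoiding_M' assms(3) by blast+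
  moreover have "z \<notin> M" using step.prems reaches_T_avoiding_M' assms(3) by blast
  ultimately show ?case using step.hyps(2) by (auto simp: del_edges_def intro: rtrancl_into_rtrancl)
qed simp

lemma solution_M': "omnc_solution V E Vinf T M'"
  unfolding omnc_solution_def
proof (intro conjI allI impI notI)
  show "M' \<subseteq> V - Vinf"
    using solution separator unfolding M'_def omnc_solution_def separator_def by blast
next
  fix p assume p: "odd_T_path V E T p" and avoids: "set p \<inter> M' = {}"
  then have edges: "successively (\<lambda>a b. (a, b) \<in> E) p" and "last p \<in> T"
    unfolding odd_T_path_def is_path_def by simp_all
  from edges have "successively (\<lambda>a b. (a, b) \<in> del_edges E M') p"
    by (rule successively_mono) (use avoids in \<open>auto simp: del_edges_def\<close>)
  then have "x \<notin> M" if "x \<in> set p" for x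
    using rtrancl_to_last_if_successively[OF _ that] reaches_T_avoiding_M' \<open>last p \<in> T\<close> by blast
  then show False using solution p unfolding omnc_solution_def by blast
qed

lemma card_M'_le:
  assumes "card S' \<le> card S"
  shows "card M' \<le> card M"
proof -
  have "finite M" "finite S'" using dag solution separator finite_subset
    by (auto simp: dag_def omnc_solution_def separator_def)
  have "card M' \<le> card (M - S) + card (S' - r_shadow V E T M)"
    unfolding M'_def by (rule card_Un_le)
  also have "\<dots> \<le> card (M - S) + card S"
    using \<open>finite S'\<close> assms by (meson Diff_subset add_left_mono card_mono le_trans)
  also have "\<dots> = card M"
    using S_subset \<open>finite M\<close> by (simp add: card_Diff_subset finite_subset card_mono)
  finally show ?thesis .
qed

lemma r_shadow_M'_superset: "r_shadow V E T M \<union> (S - S') \<subseteq> r_shadow V E T M'"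
proof
  fix x assume x: "x \<in> r_shadow V E T M \<union> (S - S')"
  then have "x \<in> V - M'"
    using solution S_subset by (auto simp: M'_def r_shadow_def omnc_solution_def)
  moreover have "\<not> (x, t) \<in> (del_edges E M')\<^sup>*" if "t \<in> T" for t
    using reaches_T_avoiding_M'[OF _ that] x S_subset
    by (auto simp: r_shadow_iff_rtrancl[OF dag])
  ultimately show "x \<in> r_shadow V E T M'" by (auto simp: r_shadow_iff_rtrancl[OF dag])
qed

lemma shadows_M'_superset:
  "r_shadow V E T M \<union> f_shadow V E T M \<union> M \<subseteq> r_shadow V E T M' \<union> f_shadow V E T M' \<union> M'"
proof
  fix x assume x: "x \<in> r_shadow V E T M \<union> f_shadow V E T M \<union> M"
  show "x \<in> r_shadow V E T M' \<union> f_shadow V E T M' \<union> M'"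
  proof (rule ccontr)
    assume "x \<notin> r_shadow V E T M' \<union> f_shadow V E T M' \<union> M'"
    moreover have "x \<in> V" using x solution by (auto simp: r_shadow_def f_shadow_def omnc_solution_def)
    ultimately obtain t t0 where t: "t \<in> T" "(x, t) \<in> (del_edges E M')\<^sup>*"
      and t0: "t0 \<in> T" "t0 \<in> V" "(t0, x) \<in> (del_edges E M')\<^sup>*"
      by (auto simp: r_shadow_iff_rtrancl[OF dag] f_shadow_def reach_def has_path_iff_rtrancl[OF dag])
    have "x \<notin> M" "x \<notin> r_shadow V E T M"
      using reaches_T_avoiding_M'[OF t(2,1)] by (auto simp: r_shadow_iff_rtrancl[OF dag])
    moreover have "x \<in> reach V E M T"
      using rtrancl_avoiding_M_if_reaches_T[OF t0(3) t(2,1)] t0 terminals_disjoint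
      by (auto simp: reach_def has_path_iff_rtrancl[OF dag])
    ultimately show False using x by (auto simp: f_shadow_def)
  qed
qed

end

theorem lemma2p9:
  fixes V :: "'a set" and E :: "('a \<times> 'a) set" and Vinf T M :: "'a set" and k :: nat
  assumes "dag V E"
    and "Vinf \<subseteq> V" and "T \<subseteq> Vinf" and "k > 0"
    and "omnc_solution V E Vinf T M"
    and "v \<in> r_shadow V E T M"
    and "\<not> (\<exists>S \<subseteq> M. important_separator V E Vinf {v} T S)"
  shows "\<exists>M'. omnc_solution V E Vinf T M' \<and> card M' \<le> card M \<and>
    r_shadow V E T M \<union> f_shadow V E T M \<union> M \<subseteq> r_shadow V E T M' \<union> f_shadow V E T M' \<union> M' \<and>
    r_shadow V E T M \<subset> r_shadow V E T M'"
proof -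
  have v: "{v} \<inter> M = {}" "reach V E M {v} \<inter> T = {}"
    using assms(6) by (auto simp: r_shadow_iff_reach)
  define S where "S = boundary V E M {v}"
  have "separator V E Vinf {v} T S"
    unfolding S_def using assms(1,5) v
    by (intro boundary_separator) (auto simp: omnc_solution_def)
  then obtain S' where important: "important_separator V E Vinf {v} T S'"
    and card: "card S' \<le> card S" and reach: "reach V E S {v} \<subseteq> reach V E S' {v}"
    using important_separator_exists assms(1) by (metis dag_def)
  then have sep': "separator V E Vinf {v} T S'" by (simp add: important_separator_def)
  interpret shadow_replacement V E Vinf T M "{v}" S S'
  proof
    show "S - S' \<subseteq> reach V E S' {v}"
      using boundary_diff_subset_reach assms(1) reach reach_boundary[OF assms(1) v(1)]
      by (simp add: S_def)
  qed (use assms(1,3,5) sep' in \<open>simp_all add: S_def boundary_subset\<close>)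
  have "finite S'" using sep' assms(1) finite_subset by (auto simp: dag_def separator_def)
  moreover have "\<not> S' \<subseteq> M" using assms(7) important by blast
  ultimately obtain s where "s \<in> S - S'"
    using card_seteq[of S' S] card S_subset by blast
  then have "s \<in> r_shadow V E T M' - r_shadow V E T M"
    using r_shadow_M'_superset S_subset by (auto simp: r_shadow_def)
  then show ?thesis
    using solution_M' card_M'_le[OF card] shadows_M'_superset r_shadow_M'_superset by blast
qed

end
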